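(* Let $2/5 < r < 1$, put $p = \left\lceil \frac{5r-2}{1-r} \right\rceil$ and $\alpha = p - \frac{5r-2}{1-r}$ (so $p \ge 1$ and $0 \le \alpha < 1$), and let $\alpha = (0.\alpha_1 \alpha_2 \cdots)_2$ be the binary expansion of $\alpha$ with infinitely many zero digits. Define binary words $w^{\langle 0 \rangle} = \emptyset$ (the empty word) and $w^{\langle i \rangle} = w^{\langle i-1 \rangle} w^{\langle i-1 \rangle}\, 01011\, 0^{p - \alpha_i}$ for $i \geq 1$. Let $\ell_i$ be the length of $w^{\langle i \rangle}$, $\zeta_i = |Z(w^{\langle i \rangle})|$ and $\pi_i = |P(w^{\langle i \rangle})|$. Then for every $i \geq 1$, $$\ell_i = (2^i - 1)(p+5) - \sum_{j=1}^{i} 2^{i-j}\alpha_j,\qquad \zeta_i = (2^i - 1)(p+2) - \sum_{j=1}^{i} 2^{i-j}\alpha_j,$$ $$\pi_i = (2^i - 1)p - 1 - \sum_{j=1}^{i} 2^{i-j}\alpha_j + \delta_{p,1}\alpha_i,$$ where $\delta_{p,1}$ is the Kronecker delta.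
   Context: For a binary word $x$, $x^j$ denotes $j$ concatenated copies of $x$ ($x^0$ is empty), and juxtaposition denotes concatenation. For a binary word $w = w_1 \cdots w_\ell$ of length $\ell$, $Z(w)$ is the set of indices $i$ with $w_i = 0$, and $P(w)$ is the set of indices $i \geq 2$ such that at least one of the following holds: (i) $\ell \geq i$ and $w_{i-1} w_i = 00$; (ii) $\ell \geq i+2$ and $w_{i-1} w_i w_{i+1} w_{i+2} = 0100$; (iii) $\ell \geq i+3$ and $w_{i-1} \cdots w_{i+3} = 01010$. *)

theory Defs
  imports Complex_Main
begin

text \<open>Binary words are lists over nat with entries 0/1; positions are 1-indexed as in the paper.\<close>

definition letter :: "nat list \<Rightarrow> nat \<Rightarrow> nat" where
  "letter w i = w ! (i - 1)"

definition Zset :: "nat list \<Rightarrow> nat set" where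
  "Zset w = {i. 1 \<le> i \<and> i \<le> length w \<and> letter w i = 0}"

definition Pset :: "nat list \<Rightarrow> nat set" where
  "Pset w = {i. 2 \<le> i \<and>
     ((length w \<ge> i \<and> letter w (i-1) = 0 \<and> letter w i = 0)
    \<or> (length w \<ge> i + 2 \<and> letter w (i-1) = 0 \<and> letter w i = 1 \<and>
         letter w (i+1) = 0 \<and> letter w (i+2) = 0)
    \<or> (length w \<ge> i + 3 \<and> letter w (i-1) = 0 \<and> letter w i = 1 \<and>
         letter w (i+1) = 0 \<and> letter w (i+2) = 1 \<and> letter w (i+3) = 0))}"

text \<open>The words w<i> built from p and digits d (d j = alpha_j for j >= 1).\<close>
fun wrd :: "nat \<Rightarrow> (nat \<Rightarrow> nat) \<Rightarrow> nat \<Rightarrow> nat list" where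
  "wrd p d 0 = []"
| "wrd p d (Suc i) = wrd p d i @ wrd p d i @ [0,1,0,1,1] @ replicate (p - d (Suc i)) 0"

end

theory Submission imports Defs begin

text \<open>Since the three patterns 00, 0100, 01010 have length at most 5, whether position i
belongs to P(w) depends only on the five letters starting at i - 1. So card P(w) counts the
suffixes of w beginning with a pattern, and this count is additive over concatenations up to
boundary effects of four letters. In w<i+1> = w<i> w<i> 01011 0^k the only boundary effects sit
where a run of zeros is followed by the marker 01011, each such run gaining exactly one
P-position iff it is nonempty. Hence length, number of zeros and (after a correction term)
number of P-positions all satisfy the recurrence x<i+1> = 2 x<i> + c - alpha<i+1>, whose solution
is the claimed closed form.\<close>

fun starts_P_pattern :: "nat list \<Rightarrow> bool" where
  "starts_P_pattern (0 # 0 # _) = True"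
| "starts_P_pattern (0 # Suc 0 # 0 # 0 # _) = True"
| "starts_P_pattern (0 # Suc 0 # 0 # Suc 0 # 0 # _) = True"
| "starts_P_pattern _ = False"

fun P_count :: "nat list \<Rightarrow> nat" where
  "P_count [] = 0"
| "P_count (x # xs) = (if starts_P_pattern (x # xs) then 1 else 0) + P_count xs"

abbreviation block :: "nat list" where
  "block \<equiv> [0, 1, 0, 1, 1]"

lemma starts_P_pattern_iff_nth:
  "starts_P_pattern w \<longleftrightarrow>
     (length w \<ge> 2 \<and> w!0 = 0 \<and> w!1 = 0)
   \<or> (length w \<ge> 4 \<and> w!0 = 0 \<and> w!1 = 1 \<and> w!2 = 0 \<and> w!3 = 0)
   \<or> (length w \<ge> 5 \<and> w!0 = 0 \<and> w!1 = 1 \<and> w!2 = 0 \<and> w!3 = 1 \<and> w!4 = 0)"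
  by (induction w rule: starts_P_pattern.induct) (auto simp: numeral_eq_Suc)

lemma starts_P_pattern_take: "starts_P_pattern (take 5 w) = starts_P_pattern w"
  by (induction w rule: starts_P_pattern.induct) (auto simp: numeral_eq_Suc)

lemma mem_Pset_iff: "i \<in> Pset w \<longleftrightarrow> 2 \<le> i \<and> starts_P_pattern (drop (i - 2) w)"
proof (cases "2 \<le> i")
  case True
  then obtain j where j: "i = j + 2" by (metis le_add_diff_inverse2)
  have "i \<in> Pset w \<longleftrightarrow>
     (length w \<ge> j + 2 \<and> w!j = 0 \<and> w!(j+1) = 0)
   \<or> (length w \<ge> j + 4 \<and> w!j = 0 \<and> w!(j+1) = 1 \<and> w!(j+2) = 0 \<and> w!(j+3) = 0)
   \<or> (length w \<ge> j + 5 \<and> w!j = 0 \<and> w!(j+1) = 1 \<and> w!(j+2) = 0 \<and> w!(j+3) = 1 \<and> w!(j+4) = 0)"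
    unfolding Pset_def letter_def j by (simp add: numeral_eq_Suc)
  also have "\<dots> \<longleftrightarrow> starts_P_pattern (drop j w)"
  proof (cases "j \<le> length w")
    case True
    then show ?thesis unfolding starts_P_pattern_iff_nth by (auto simp: nth_drop)
  qed (simp add: starts_P_pattern_iff_nth)
  finally show ?thesis using j by simp
qed (simp add: Pset_def)

lemma card_suffixes_starting_P_pattern:
  "card {j. j < length w \<and> starts_P_pattern (drop j w)} = P_count w"
proof (induction w)
  case (Cons x xs)
  have "{j. j < length (x # xs) \<and> starts_P_pattern (drop j (x # xs))} =
      (if starts_P_pattern (x # xs) then {0} else {})
      \<union> Suc ` {j. j < length xs \<and> starts_P_pattern (drop j xs)}"
    by (auto simp: image_iff less_Suc_eq_0_disj)
  then show ?case using Cons by (auto simp: card_image)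
qed simp

lemma card_Pset: "card (Pset w) = P_count w"
proof -
  have "Pset w = (\<lambda>j. j + 2) ` {j. j < length w \<and> starts_P_pattern (drop j w)}"
  proof (rule set_eqI)
    fix i
    have "starts_P_pattern (drop j w) \<Longrightarrow> j < length w" for j
      by (cases "j < length w") auto
    moreover have "2 \<le> i \<Longrightarrow> i = (i - 2) + (2::nat)" by simp
    ultimately show "i \<in> Pset w \<longleftrightarrow>
        i \<in> (\<lambda>j. j + 2) ` {j. j < length w \<and> starts_P_pattern (drop j w)}"
      unfolding mem_Pset_iff image_iff by force
  qed
  then show ?thesis
    by (simp add: card_image inj_on_def card_suffixes_starting_P_pattern)
qed

lemma card_Zset: "card (Zset w) = length (filter (\<lambda>x. x = 0) w)"
proof -
  have "Zset w = Suc ` {j. j < length w \<and> w!j = 0}"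
  proof (rule set_eqI)
    fix i show "i \<in> Zset w \<longleftrightarrow> i \<in> Suc ` {j. j < length w \<and> w!j = 0}"
      unfolding Zset_def letter_def by (cases i) (auto simp: image_iff)
  qed
  then show ?thesis by (simp add: card_image length_filter_conv_card)
qed

lemma P_count_append_local:
  assumes "take 4 ys = take 4 ys'"
  shows "P_count (xs @ ys) + P_count ys' = P_count (xs @ ys') + P_count ys"
proof (induction xs)
  case (Cons x xs)
  have "take (4 - length xs) ys = take (4 - length xs) ys'"
    by (metis assms min.absorb1 diff_le_self take_take)
  then have "take 5 (x # xs @ ys) = take 5 (x # xs @ ys')"
    by (simp add: numeral_eq_Suc)
  then have "starts_P_pattern (x # xs @ ys) = starts_P_pattern (x # xs @ ys')"
    by (metis starts_P_pattern_take)
  then show ?case using Cons by simp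
qed simp

lemma P_count_append_block: "P_count (xs @ block @ ys) = P_count (xs @ block) + P_count ys"
  using P_count_append_local[of "block @ ys" block xs] by (simp add: numeral_eq_Suc)

lemma P_count_replicate_zero: "P_count (replicate k 0) = k - 1"
proof (induction k)
  case (Suc k) then show ?case by (cases k) auto
qed simp

lemma P_count_zeros_block: "P_count (replicate k 0 @ block @ ys) = k + P_count ys"
proof (induction k)
  case (Suc k) then show ?case by (cases k) auto
qed simp

text \<open>Once block follows, the last zero of the run 0^k is followed by a zero, so the run gains
exactly one P-position when it is nonempty.\<close>

lemma P_count_glue:
  "P_count ((xs @ block @ replicate k 0) @ block @ ys)
     = P_count (xs @ block @ replicate k 0) + P_count ys + (if k = 0 then 0 else 1)"
proof -
  have "P_count ((xs @ block @ replicate k 0) @ block @ ys)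
      = P_count (xs @ block) + (k + P_count ys)"
    using P_count_append_block[of xs "replicate k 0 @ block @ ys"] P_count_zeros_block[of k ys]
    by simp
  moreover have "P_count (xs @ block @ replicate k 0) = P_count (xs @ block) + (k - 1)"
    using P_count_append_block[of xs "replicate k 0"] by (simp add: P_count_replicate_zero)
  ultimately show ?thesis by simp
qed

lemma wrd_Suc_starts_block: "\<exists>ys. wrd p d (Suc i) = block @ ys"
proof (induction i)
  case (Suc i)
  then obtain ys where "wrd p d (Suc i) = block @ ys" by blast
  then show ?case by (subst wrd.simps) auto
qed simp

lemma P_count_wrd_Suc_Suc:
  "P_count (wrd p d (Suc (Suc n))) = 2 * P_count (wrd p d (Suc n))
     + (if p - d (Suc n) = 0 then 0 else 2) + (p - d (Suc (Suc n)) - 1)"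
proof -
  define k' where "k' = p - d (Suc n)"
  define k where "k = p - d (Suc (Suc n))"
  define u where "u = wrd p d n @ wrd p d n"
  define w where "w = wrd p d (Suc n)"
  have w_end: "w = u @ block @ replicate k' 0"
    unfolding w_def u_def k'_def by simp
  obtain ys where w_start: "w = block @ ys"
    using wrd_Suc_starts_block unfolding w_def by blast
  have "wrd p d (Suc (Suc n)) = w @ block @ (ys @ block @ replicate k 0)"
    unfolding w_def k_def by (subst wrd.simps, fold w_def, subst (2) w_start) simp
  then have "P_count (wrd p d (Suc (Suc n)))
      = P_count w + P_count (ys @ block @ replicate k 0) + (if k' = 0 then 0 else 1)"
    using P_count_glue[of u k' "ys @ block @ replicate k 0"] by (simp add: w_end)
  moreover have "P_count (ys @ block @ replicate k 0) = P_count (w @ block @ replicate k 0)"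
    by (simp add: w_start)
  moreover have "P_count (w @ block @ replicate k 0)
      = P_count w + (k - 1) + (if k' = 0 then 0 else 1)"
    using P_count_glue[of u k' "replicate k 0"] by (simp add: w_end P_count_replicate_zero)
  ultimately show ?thesis
    unfolding w_def k_def k'_def by simp
qed

lemma weighted_digit_sum_Suc:
  "(\<Sum>j=1..Suc n. 2^(Suc n - j) * int (d j))
     = 2 * (\<Sum>j=1..n. 2^(n - j) * int (d j)) + int (d (Suc n))"
proof -
  have "(\<Sum>j=1..n. 2^(Suc n - j) * int (d j)) = (\<Sum>j=1..n. 2 * (2^(n - j) * int (d j)))"
    by (rule sum.cong) (auto simp: Suc_diff_le)
  then show ?thesis by (simp add: sum.cl_ivl_Suc sum_distrib_left)
qed

lemma doubling_recurrence_closed_form: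
  fixes f :: "nat \<Rightarrow> int"
  assumes "f 0 = 0" and "\<And>i. f (Suc i) = 2 * f i + c - int (d (Suc i))"
  shows "f i = (2^i - 1) * c - (\<Sum>j=1..i. 2^(i-j) * int (d j))"
proof (induction i)
  case (Suc i)
  then show ?case
    unfolding assms(2) weighted_digit_sum_Suc Suc by (simp add: algebra_simps)
qed (simp add: assms(1))

lemma length_wrd:
  assumes "\<forall>j\<ge>1. d j \<le> p"
  shows "int (length (wrd p d i)) = (2^i - 1) * (int p + 5) - (\<Sum>j=1..i. 2^(i-j) * int (d j))"
proof (rule doubling_recurrence_closed_form)
  fix i
  have "d (Suc i) \<le> p" using assms by simp
  then show "int (length (wrd p d (Suc i)))
      = 2 * int (length (wrd p d i)) + (int p + 5) - int (d (Suc i))"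
    by (simp add: of_nat_diff)
qed simp

lemma zeros_wrd:
  assumes "\<forall>j\<ge>1. d j \<le> p"
  shows "int (length (filter (\<lambda>x. x = 0) (wrd p d i)))
           = (2^i - 1) * (int p + 2) - (\<Sum>j=1..i. 2^(i-j) * int (d j))"
proof (rule doubling_recurrence_closed_form)
  fix i
  have "d (Suc i) \<le> p" using assms by simp
  then show "int (length (filter (\<lambda>x. x = 0) (wrd p d (Suc i))))
      = 2 * int (length (filter (\<lambda>x. x = 0) (wrd p d i))) + (int p + 2) - int (d (Suc i))"
    by (simp add: of_nat_diff)
qed simp

lemma P_count_wrd:
  assumes p: "1 \<le> p" and digits: "\<forall>j\<ge>1. d j \<le> 1" and i: "1 \<le> i"
  shows "int (P_count (wrd p d i))
           = (2^i - 1) * int p - 1 - (\<Sum>j=1..i. 2^(i-j) * int (d j))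
             + (if p = 1 then int (d i) else 0)"
proof -
  txt \<open>The correction term turns the recurrence of P_count_wrd_Suc_Suc, whose inhomogeneous part
    depends on p = 1 and on the previous digit, into the doubling recurrence with constant p.\<close>
  define f where "f i = int (P_count (wrd p d i))
      + (if i = 0 then 0 else 1 - (if p = 1 then int (d i) else 0))" for i
  have "f i = (2^i - 1) * int p - (\<Sum>j=1..i. 2^(i-j) * int (d j))"
  proof (rule doubling_recurrence_closed_form)
    fix i
    have "d (Suc i) \<le> 1" using digits by simp
    show "f (Suc i) = 2 * f i + int p - int (d (Suc i))"
    proof (cases i)
      case 0
      then show ?thesis using p \<open>d (Suc i) \<le> 1\<close> P_count_replicate_zero[of "p - d 1"]
        by (cases "d 1"; cases "p = 1") (auto simp: f_def)
    next
      case (Suc n)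
      have "d (Suc n) \<le> 1" using digits by simp
      then show ?thesis using p \<open>d (Suc i) \<le> 1\<close> unfolding f_def Suc P_count_wrd_Suc_Suc
        by (cases "p = 1"; cases "d (Suc n)") (auto simp: of_nat_diff)
    qed
  qed (simp add: f_def)
  then show ?thesis using i by (simp add: f_def)
qed

theorem lemma4p12:
  fixes r :: real and p :: nat and \<alpha> :: real and d :: "nat \<Rightarrow> nat" and i :: nat
  assumes hr: "2/5 < r" "r < 1"
    and hp: "int p = \<lceil>(5*r - 2) / (1 - r)\<rceil>"
    and ha: "\<alpha> = real p - (5*r - 2) / (1 - r)"
    and hd01: "\<forall>j\<ge>1. d j \<in> {0, 1}"
    and hdsum: "(\<lambda>j. real (d (Suc j)) / 2 ^ (Suc j)) sums \<alpha>"
    and hdinf: "infinite {j. 1 \<le> j \<and> d j = 0}"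
    and hi: "1 \<le> i"
  shows "int (length (wrd p d i)) =
           (2^i - 1) * (int p + 5) - (\<Sum>j=1..i. 2^(i-j) * int (d j)) \<and>
         int (card (Zset (wrd p d i))) =
           (2^i - 1) * (int p + 2) - (\<Sum>j=1..i. 2^(i-j) * int (d j)) \<and>
         int (card (Pset (wrd p d i))) =
           (2^i - 1) * int p - 1 - (\<Sum>j=1..i. 2^(i-j) * int (d j))
             + (if p = 1 then int (d i) else 0)"
proof -
  txt \<open>Only p \<ge> 1 and the digits being bits matter.\<close>
  have "0 < (5*r - 2) / (1 - r)" using hr by (intro divide_pos_pos) auto
  then have p_pos: "1 \<le> p" using hp by linarith
  have digits: "\<forall>j\<ge>1. d j \<le> 1" using hd01 by auto
  then have "\<forall>j\<ge>1. d j \<le> p" using p_pos by (meson order_trans)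
  then show ?thesis
    using length_wrd zeros_wrd P_count_wrd[OF p_pos digits hi]
    by (simp add: card_Zset card_Pset)
qed

end
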